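(* Let $\gamma=(\gamma_1,\dots,\gamma_d)\in\mathbb R^d$ and $\mathbf n\in\mathbb N_0^d$ with $n_i\ge1$ for $1\le i\le d$. Then $$P_{\mathbf n}^{(\gamma,-1)}(x)=(1-|x|)\sum_{i=1}^d\frac{n_i(\gamma_i+n_i)}{|\mathbf n|}P_{\mathbf n-e_i}^{(\gamma,1)}(x).$$
   Context: $|x|=x_1+\dots+x_d$, $|\mathbf n|=n_1+\dots+n_d$, $e_i$ the standard basis of $\mathbb R^d$. For $\boldsymbol\gamma=(\gamma_1,\dots,\gamma_{d+1})\in\mathbb R^{d+1}$ and $\mathbf n\in\mathbb N_0^d$, the Rodrigues function on the interior of the simplex $T^d=\{x_i\ge0,|x|\le1\}$ is $P_{\mathbf n}^{\boldsymbol\gamma}(x)=x_1^{-\gamma_1}\cdots x_d^{-\gamma_d}(1-|x|)^{-\gamma_{d+1}}\frac{\partial^{|\mathbf n|}}{\partial x_1^{n_1}\cdots\partial x_d^{n_d}}\big[x_1^{\gamma_1+n_1}\cdots x_d^{\gamma_d+n_d}(1-|x|)^{\gamma_{d+1}+|\mathbf n|}\big]$; $(\gamma,c)$ denotes $(\gamma_1,\dots,\gamma_d,c)$. *)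

theory Defs
  imports "HOL-Analysis.Analysis"
begin

text \<open>Points of R^d are functions x :: nat => real, coordinates x 1, ..., x d
(other coordinates are ignored). Multi-indices n :: nat => nat with entries n 1..n d;
gamma :: nat => real with entries gamma 1 .. gamma (d+1).\<close>

definition abs_sum :: "nat \<Rightarrow> (nat \<Rightarrow> 'a::comm_monoid_add) \<Rightarrow> 'a" where
  "abs_sum d x = (\<Sum>i=1..d. x i)"

definition partial :: "nat \<Rightarrow> ((nat \<Rightarrow> real) \<Rightarrow> real) \<Rightarrow> (nat \<Rightarrow> real) \<Rightarrow> real" where
  "partial i f x = deriv (\<lambda>t. f (x(i := t))) (x i)"

fun mixed_partial :: "nat \<Rightarrow> (nat \<Rightarrow> nat) \<Rightarrow> ((nat \<Rightarrow> real) \<Rightarrow> real) \<Rightarrow> (nat \<Rightarrow> real) \<Rightarrow> real" where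
  "mixed_partial 0 n f = f"
| "mixed_partial (Suc k) n f = (partial (Suc k) ^^ n (Suc k)) (mixed_partial k n f)"

definition in_simplex_interior :: "nat \<Rightarrow> (nat \<Rightarrow> real) \<Rightarrow> bool" where
  "in_simplex_interior d x \<longleftrightarrow> (\<forall>i\<in>{1..d}. 0 < x i) \<and> abs_sum d x < 1"

definition rodrigues :: "nat \<Rightarrow> (nat \<Rightarrow> real) \<Rightarrow> (nat \<Rightarrow> nat) \<Rightarrow> (nat \<Rightarrow> real) \<Rightarrow> real" where
  "rodrigues d \<gamma> n x =
     (\<Prod>i=1..d. x i powr (- \<gamma> i)) * (1 - abs_sum d x) powr (- \<gamma> (d+1)) *
     mixed_partial d n
       (\<lambda>y. (\<Prod>i=1..d. y i powr (\<gamma> i + real (n i))) *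
            (1 - abs_sum d y) powr (\<gamma> (d+1) + real (abs_sum d n))) x"

end

theory Submission
  imports Defs
begin

text \<open>On the open simplex every function in sight is a finite sum of generalised monomials
  c x^a (1 - |x|)^b; this class is closed under the partial derivatives, which act on it
  linearly and commute. Put a_i = \<gamma>_i + n_i, N = |n| and D(m, a, b) = \<partial>^m [x^a (1 - |x|)^b].
  Differentiating x^a (1 - |x|)^N in x_i gives
    a_i D(n - e_i, a - e_i, N) = D(n, a, N) + N D(n - e_i, a, N - 1),
  and the Leibniz rule for the factor 1 - |x| gives
    D(n, a, N) = (1 - |x|) D(n, a, N - 1) - \<Sum>_j n_j D(n - e_j, a, N - 1).
  Weighting the first identity by n_i and summing over i, the sums cancel (as \<Sum>_i n_i = N) and
  leave N (1 - |x|) D(n, a, N - 1). Up to the common prefactor, the left-hand side of the theorem is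
  (1 - |x|) D(n, a, N - 1) and its i-th summand is a_i n_i / N D(n - e_i, a - e_i, N) / (1 - |x|).\<close>

definition monomial :: "nat \<Rightarrow> (nat \<Rightarrow> real) \<Rightarrow> real \<Rightarrow> (nat \<Rightarrow> real) \<Rightarrow> real" where
  "monomial d a b y = (\<Prod>j=1..d. y j powr a j) * (1 - abs_sum d y) powr b"

text \<open>A list of triples (c, a, b) represents \<Sum> c x^a (1 - |x|)^b; \<open>partial_spoly i\<close> differentiates
  such a representation in x_i.\<close>

type_synonym spoly = "(real \<times> (nat \<Rightarrow> real) \<times> real) list"

definition eval_spoly :: "nat \<Rightarrow> spoly \<Rightarrow> (nat \<Rightarrow> real) \<Rightarrow> real" where
  "eval_spoly d T y = (\<Sum>(c, a, b)\<leftarrow>T. c * monomial d a b y)"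

fun partial_term :: "nat \<Rightarrow> real \<times> (nat \<Rightarrow> real) \<times> real \<Rightarrow> spoly" where
  "partial_term i (c, a, b) = [(c * a i, a(i := a i - 1), b), (- c * b, a, b - 1)]"

definition partial_spoly :: "nat \<Rightarrow> spoly \<Rightarrow> spoly" where
  "partial_spoly i T = concat (map (partial_term i) T)"

definition scale_spoly :: "real \<Rightarrow> spoly \<Rightarrow> spoly" where
  "scale_spoly r T = map (\<lambda>(c, a, b). (r * c, a, b)) T"

definition slack_spoly :: "spoly \<Rightarrow> spoly" where
  "slack_spoly T = map (\<lambda>(c, a, b). (c, a, b + 1)) T"

lemma eval_spoly_simps [simp]:
  "eval_spoly d [] y = 0"
  "eval_spoly d ((c, a, b) # T) y = c * monomial d a b y + eval_spoly d T y"
  "eval_spoly d (T @ S) y = eval_spoly d T y + eval_spoly d S y"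
  by (simp_all add: eval_spoly_def)

lemma partial_spoly_simps [simp]:
  "partial_spoly i [] = []"
  "partial_spoly i (t # T) = partial_term i t @ partial_spoly i T"
  "partial_spoly i (T @ S) = partial_spoly i T @ partial_spoly i S"
  by (simp_all add: partial_spoly_def)

lemma eval_scale_spoly [simp]: "eval_spoly d (scale_spoly r T) y = r * eval_spoly d T y"
  by (induction T) (auto simp: scale_spoly_def algebra_simps)

lemma partial_scale_spoly [simp]:
  "eval_spoly d (partial_spoly i (scale_spoly r T)) y = r * eval_spoly d (partial_spoly i T) y"
  by (induction T) (auto simp: scale_spoly_def algebra_simps)

lemma abs_sum_fun_upd:
  "i \<in> {1..d} \<Longrightarrow> abs_sum d (y(i := t)) = abs_sum d y - y i + (t :: real)"
proof -
  assume i: "i \<in> {1..d}"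
  have "sum (y(i := t)) ({1..d} - {i}) = sum y ({1..d} - {i})" by (rule sum.cong) auto
  then show ?thesis using i by (simp add: abs_sum_def sum.remove)
qed

lemma monomial_fun_upd:
  assumes i: "i \<in> {1..d}"
  shows "monomial d (a(i := v)) b (y(i := t)) =
    t powr v * (\<Prod>j\<in>{1..d} - {i}. y j powr a j) * (1 - (abs_sum d y - y i + t)) powr b"
proof -
  have "(\<Prod>j\<in>{1..d} - {i}. (y(i := t)) j powr (a(i := v)) j) = (\<Prod>j\<in>{1..d} - {i}. y j powr a j)"
    by (rule prod.cong) auto
  then show ?thesis using i by (simp add: monomial_def prod.remove abs_sum_fun_upd)
qed

lemma monomial_split:
  "i \<in> {1..d} \<Longrightarrow> monomial d a b y =
    y i powr a i * (\<Prod>j\<in>{1..d} - {i}. y j powr a j) * (1 - abs_sum d y) powr b"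
  using monomial_fun_upd[of i d a "a i" b y "y i"] by simp

lemma has_derivative_monomial:
  assumes y: "in_simplex_interior d y" and i: "i \<in> {1..d}"
  shows "((\<lambda>t. monomial d a b (y(i := t))) has_real_derivative
           a i * monomial d (a(i := a i - 1)) b y - b * monomial d a (b - 1) y) (at (y i))"
proof -
  define P where "P = (\<Prod>j\<in>{1..d} - {i}. y j powr a j)"
  define S where "S = abs_sum d y"
  have pos: "y i > 0" "1 - S > 0" using y i unfolding in_simplex_interior_def S_def by auto
  have "((\<lambda>t. t powr a i * P * (1 - (S - y i + t)) powr b) has_real_derivative
        a i * y i powr (a i - 1) * P * (1 - S) powr b - b * (y i powr a i * P * (1 - S) powr (b - 1)))
        (at (y i))"
    using pos by (auto intro!: derivative_eq_intros simp: algebra_simps)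
  moreover have "(\<lambda>t. monomial d a b (y(i := t))) = (\<lambda>t. t powr a i * P * (1 - (S - y i + t)) powr b)"
    using monomial_fun_upd[OF i, of a "a i" b y] by (simp add: P_def S_def)
  ultimately show ?thesis
    using monomial_fun_upd[OF i, of a "a i - 1" b y "y i"] monomial_split[OF i, of a "b - 1" y]
    by (simp add: P_def S_def mult.assoc)
qed


lemma partial_monomial:
  "in_simplex_interior d y \<Longrightarrow> i \<in> {1..d} \<Longrightarrow>
    partial i (monomial d a b) y = a i * monomial d (a(i := a i - 1)) b y - b * monomial d a (b - 1) y"
  unfolding partial_def by (rule DERIV_imp_deriv[OF has_derivative_monomial])

lemma has_derivative_eval_spoly:
  assumes y: "in_simplex_interior d y" and i: "i \<in> {1..d}"
  shows "((\<lambda>t. eval_spoly d T (y(i := t))) has_real_derivative eval_spoly d (partial_spoly i T) y)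
           (at (y i))"
proof (induction T)
  case Nil
  then show ?case by simp
next
  case (Cons t T)
  obtain c a b where t: "t = (c, a, b)" by (cases t)
  have "((\<lambda>s. c * monomial d a b (y(i := s)) + eval_spoly d T (y(i := s))) has_real_derivative
          c * (a i * monomial d (a(i := a i - 1)) b y - b * monomial d a (b - 1) y) +
          eval_spoly d (partial_spoly i T) y) (at (y i))"
    by (intro DERIV_add DERIV_cmult has_derivative_monomial[OF y i] Cons)
  moreover have "eval_spoly d (partial_spoly i (t # T)) y =
      c * (a i * monomial d (a(i := a i - 1)) b y - b * monomial d a (b - 1) y) +
      eval_spoly d (partial_spoly i T) y"
    by (simp add: t algebra_simps)
  ultimately show ?case by (simp only: t eval_spoly_simps(2))
qed

lemma partial_eval_spoly:
  "in_simplex_interior d y \<Longrightarrow> i \<in> {1..d} \<Longrightarrow>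
    partial i (eval_spoly d T) y = eval_spoly d (partial_spoly i T) y"
  unfolding partial_def by (rule DERIV_imp_deriv[OF has_derivative_eval_spoly])

lemma eventually_in_simplex_interior_fun_upd:
  assumes y: "in_simplex_interior d y" and i: "i \<in> {1..d}"
  shows "\<forall>\<^sub>F t in nhds (y i). in_simplex_interior d (y(i := t))"
proof -
  let ?S = "{0<..<y i + (1 - abs_sum d y)}"
  have "y i \<in> ?S" using y i unfolding in_simplex_interior_def by auto
  then have "\<forall>\<^sub>F t in nhds (y i). t \<in> ?S" by (intro eventually_nhds_in_open) auto
  then show ?thesis
    by eventually_elim (use y i in \<open>auto simp: in_simplex_interior_def abs_sum_fun_upd\<close>)
qed

lemma partial_cong_simplex:
  assumes "\<And>z. in_simplex_interior d z \<Longrightarrow> f z = g z"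
    and y: "in_simplex_interior d y" and i: "i \<in> {1..d}"
  shows "partial i f y = partial i g y"
  unfolding partial_def
proof (rule deriv_cong_ev[OF _ refl])
  show "\<forall>\<^sub>F t in nhds (y i). f (y(i := t)) = g (y(i := t))"
    using eventually_in_simplex_interior_fun_upd[OF y i] by eventually_elim (simp add: assms(1))
qed

lemma monomial_add_one:
  "in_simplex_interior d y \<Longrightarrow> monomial d a (b + 1) y = (1 - abs_sum d y) * monomial d a b y"
  by (simp add: monomial_def in_simplex_interior_def powr_add)

lemma slack_spoly_simps [simp]:
  "slack_spoly [] = []"
  "slack_spoly ((c, a, b) # T) = (c, a, b + 1) # slack_spoly T"
  by (simp_all add: slack_spoly_def)

lemma eval_slack_spoly:
  "in_simplex_interior d y \<Longrightarrow> eval_spoly d (slack_spoly T) y = (1 - abs_sum d y) * eval_spoly d T y"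
  by (induction T) (auto simp: monomial_add_one algebra_simps)

lemma eval_partial_slack_spoly:
  assumes y: "in_simplex_interior d y"
  shows "eval_spoly d (partial_spoly i (slack_spoly T)) y =
           (1 - abs_sum d y) * eval_spoly d (partial_spoly i T) y - eval_spoly d T y"
proof (induction T)
  case Nil
  then show ?case by simp
next
  case (Cons t T)
  obtain c a b where "t = (c, a, b)" by (cases t)
  moreover have "monomial d a b y = (1 - abs_sum d y) * monomial d a (b - 1) y"
    using monomial_add_one[OF y, of a "b - 1"] by simp
  ultimately show ?case
    using Cons by (simp add: monomial_add_one[OF y]) (simp add: algebra_simps)
qed

lemma eval_partial_spoly_commute:
  "eval_spoly d (partial_spoly i (partial_spoly j T)) y = eval_spoly d (partial_spoly j (partial_spoly i T)) y"
proof (induction T)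
  case Nil
  then show ?case by simp
next
  case (Cons t T)
  obtain c a b where t: "t = (c, a, b)" by (cases t)
  show ?case
  proof (cases "i = j")
    case False
    then have "a(j := a j - 1, i := a i - 1) = a(i := a i - 1, j := a j - 1)"
      by (rule fun_upd_twist[symmetric])
    with Cons False show ?thesis by (simp add: t algebra_simps)
  qed simp
qed

definition simplex_poly :: "nat \<Rightarrow> ((nat \<Rightarrow> real) \<Rightarrow> real) \<Rightarrow> bool" where
  "simplex_poly d f \<longleftrightarrow> (\<exists>T. \<forall>y. in_simplex_interior d y \<longrightarrow> f y = eval_spoly d T y)"

lemma simplex_poly_monomial [simp]: "simplex_poly d (monomial d a b)"
  unfolding simplex_poly_def by (intro exI[of _ "[(1, a, b)]"]) simp

lemma partial_eq_eval_partial_spoly: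
  assumes "\<And>z. in_simplex_interior d z \<Longrightarrow> f z = eval_spoly d T z"
    and "in_simplex_interior d y" "i \<in> {1..d}"
  shows "partial i f y = eval_spoly d (partial_spoly i T) y"
  using partial_cong_simplex[OF assms] partial_eval_spoly[OF assms(2,3)] by simp

lemma simplex_poly_partial: "simplex_poly d f \<Longrightarrow> i \<in> {1..d} \<Longrightarrow> simplex_poly d (partial i f)"
  unfolding simplex_poly_def using partial_eq_eval_partial_spoly by blast

lemma simplex_poly_lincomb:
  assumes "simplex_poly d f" "simplex_poly d g"
  shows "simplex_poly d (\<lambda>z. r * f z + s * g z)"
proof -
  obtain T S where "\<forall>y. in_simplex_interior d y \<longrightarrow> f y = eval_spoly d T y"
    and "\<forall>y. in_simplex_interior d y \<longrightarrow> g y = eval_spoly d S y"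
    using assms unfolding simplex_poly_def by blast
  then show ?thesis
    unfolding simplex_poly_def by (intro exI[of _ "scale_spoly r T @ scale_spoly s S"]) simp
qed

lemma simplex_poly_sum:
  "finite A \<Longrightarrow> (\<And>j. j \<in> A \<Longrightarrow> simplex_poly d (F j)) \<Longrightarrow> simplex_poly d (\<lambda>z. \<Sum>j\<in>A. c j * F j z)"
proof (induction A rule: finite_induct)
  case empty
  show ?case unfolding simplex_poly_def by (intro exI[of _ "[]"]) simp
next
  case (insert j A)
  then have "simplex_poly d (\<lambda>z. c j * F j z + 1 * (\<Sum>j\<in>A. c j * F j z))"
    by (intro simplex_poly_lincomb) auto
  then show ?case using insert by simp
qed

lemma simplex_poly_slack:
  assumes "simplex_poly d f"
  shows "simplex_poly d (\<lambda>z. (1 - abs_sum d z) * f z)"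
proof -
  obtain T where "\<forall>y. in_simplex_interior d y \<longrightarrow> f y = eval_spoly d T y"
    using assms unfolding simplex_poly_def by blast
  then show ?thesis
    unfolding simplex_poly_def by (intro exI[of _ "slack_spoly T"]) (simp add: eval_slack_spoly)
qed

lemma partial_lincomb:
  assumes "simplex_poly d f" "simplex_poly d g" "in_simplex_interior d y" "i \<in> {1..d}"
  shows "partial i (\<lambda>z. r * f z + s * g z) y = r * partial i f y + s * partial i g y"
proof -
  obtain T S where T: "\<And>y. in_simplex_interior d y \<Longrightarrow> f y = eval_spoly d T y"
    and S: "\<And>y. in_simplex_interior d y \<Longrightarrow> g y = eval_spoly d S y"
    using assms(1,2) unfolding simplex_poly_def by blast
  have "partial i (\<lambda>z. r * f z + s * g z) y =
      eval_spoly d (partial_spoly i (scale_spoly r T @ scale_spoly s S)) y"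
    by (rule partial_eq_eval_partial_spoly[OF _ assms(3,4)]) (simp add: T S)
  then show ?thesis
    using partial_eq_eval_partial_spoly[OF T assms(3,4)] partial_eq_eval_partial_spoly[OF S assms(3,4)]
    by simp
qed

lemma partial_slack:
  assumes "simplex_poly d f" "in_simplex_interior d y" "i \<in> {1..d}"
  shows "partial i (\<lambda>z. (1 - abs_sum d z) * f z) y = (1 - abs_sum d y) * partial i f y - f y"
proof -
  obtain T where T: "\<And>y. in_simplex_interior d y \<Longrightarrow> f y = eval_spoly d T y"
    using assms(1) unfolding simplex_poly_def by blast
  have "partial i (\<lambda>z. (1 - abs_sum d z) * f z) y = eval_spoly d (partial_spoly i (slack_spoly T)) y"
    by (rule partial_eq_eval_partial_spoly[OF _ assms(2,3)]) (simp add: eval_slack_spoly T)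
  then show ?thesis
    using partial_eq_eval_partial_spoly[OF T assms(2,3)] T[OF assms(2)]
    by (simp add: eval_partial_slack_spoly assms(2))
qed

lemma partial_commute:
  assumes "simplex_poly d f" "in_simplex_interior d y" "i \<in> {1..d}" "j \<in> {1..d}"
  shows "partial i (partial j f) y = partial j (partial i f) y"
proof -
  obtain T where T: "\<And>y. in_simplex_interior d y \<Longrightarrow> f y = eval_spoly d T y"
    using assms(1) unfolding simplex_poly_def by blast
  have "partial i (partial j f) y = eval_spoly d (partial_spoly i (partial_spoly j T)) y"
    by (rule partial_eq_eval_partial_spoly[OF _ assms(2,3)])
      (rule partial_eq_eval_partial_spoly[OF T _ assms(4)])
  moreover have "partial j (partial i f) y = eval_spoly d (partial_spoly j (partial_spoly i T)) y"
    by (rule partial_eq_eval_partial_spoly[OF _ assms(2,4)])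
      (rule partial_eq_eval_partial_spoly[OF T _ assms(3)])
  ultimately show ?thesis by (simp add: eval_partial_spoly_commute)
qed

definition simplex_linear_op ::
    "nat \<Rightarrow> (((nat \<Rightarrow> real) \<Rightarrow> real) \<Rightarrow> ((nat \<Rightarrow> real) \<Rightarrow> real)) \<Rightarrow> bool" where
  "simplex_linear_op d L \<longleftrightarrow>
     (\<forall>f. simplex_poly d f \<longrightarrow> simplex_poly d (L f)) \<and>
     (\<forall>f g. (\<forall>z. in_simplex_interior d z \<longrightarrow> f z = g z) \<longrightarrow>
        (\<forall>y. in_simplex_interior d y \<longrightarrow> L f y = L g y)) \<and>
     (\<forall>f g r s. simplex_poly d f \<longrightarrow> simplex_poly d g \<longrightarrow>
        (\<forall>y. in_simplex_interior d y \<longrightarrow> L (\<lambda>z. r * f z + s * g z) y = r * L f y + s * L g y))"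

lemma simplex_linear_op_poly:
  "simplex_linear_op d L \<Longrightarrow> simplex_poly d f \<Longrightarrow> simplex_poly d (L f)"
  unfolding simplex_linear_op_def by blast

lemma simplex_linear_op_cong:
  "simplex_linear_op d L \<Longrightarrow> (\<And>z. in_simplex_interior d z \<Longrightarrow> f z = g z) \<Longrightarrow>
    in_simplex_interior d y \<Longrightarrow> L f y = L g y"
  unfolding simplex_linear_op_def by blast

lemma simplex_linear_op_lincomb:
  "simplex_linear_op d L \<Longrightarrow> simplex_poly d f \<Longrightarrow> simplex_poly d g \<Longrightarrow> in_simplex_interior d y \<Longrightarrow>
    L (\<lambda>z. r * f z + s * g z) y = r * L f y + s * L g y"
  unfolding simplex_linear_op_def by blast

lemma simplex_linear_op_scale:
  "simplex_linear_op d L \<Longrightarrow> simplex_poly d f \<Longrightarrow> in_simplex_interior d y \<Longrightarrow>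
    L (\<lambda>z. r * f z) y = r * L f y"
  using simplex_linear_op_lincomb[of d L f f y r 0] by simp

lemma simplex_linear_op_sum:
  assumes L: "simplex_linear_op d L" and y: "in_simplex_interior d y"
  shows "finite A \<Longrightarrow> (\<And>j. j \<in> A \<Longrightarrow> simplex_poly d (F j)) \<Longrightarrow>
    L (\<lambda>z. \<Sum>j\<in>A. c j * F j z) y = (\<Sum>j\<in>A. c j * L (F j) y)"
proof (induction A rule: finite_induct)
  case empty
  have "simplex_poly d (\<lambda>z. 0)"
    unfolding simplex_poly_def by (intro exI[of _ "[]"]) simp
  from simplex_linear_op_scale[OF L this y, of 0] show ?case by simp
next
  case (insert j A)
  have "L (\<lambda>z. 1 * (c j * F j z) + 1 * (\<Sum>j\<in>A. c j * F j z)) y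
     = 1 * L (\<lambda>z. c j * F j z) y + 1 * L (\<lambda>z. \<Sum>j\<in>A. c j * F j z) y"
    using insert simplex_poly_lincomb[of d "F j" "F j" "c j" 0]
    by (intro simplex_linear_op_lincomb[OF L] simplex_poly_sum y) auto
  then show ?case using insert simplex_linear_op_scale[OF L _ y, of "F j" "c j"] by simp
qed

lemma simplex_linear_op_partial: "i \<in> {1..d} \<Longrightarrow> simplex_linear_op d (partial i)"
  unfolding simplex_linear_op_def
  using simplex_poly_partial partial_cong_simplex partial_lincomb by blast

lemma simplex_linear_op_id: "simplex_linear_op d (\<lambda>f. f)"
  unfolding simplex_linear_op_def by auto

lemma simplex_linear_op_comp:
  assumes A: "simplex_linear_op d A" and B: "simplex_linear_op d B"
  shows "simplex_linear_op d (\<lambda>f. A (B f))"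
  unfolding simplex_linear_op_def
proof (intro conjI allI impI)
  fix f assume "simplex_poly d f"
  then show "simplex_poly d (A (B f))" using A B simplex_linear_op_poly by blast
next
  fix f g :: "(nat \<Rightarrow> real) \<Rightarrow> real" and y
  assume "\<forall>z. in_simplex_interior d z \<longrightarrow> f z = g z" "in_simplex_interior d y"
  then show "A (B f) y = A (B g) y"
    by (intro simplex_linear_op_cong[OF A] simplex_linear_op_cong[OF B]) auto
next
  fix f g :: "(nat \<Rightarrow> real) \<Rightarrow> real" and r s y
  assume fg: "simplex_poly d f" "simplex_poly d g" and y: "in_simplex_interior d y"
  have "A (B (\<lambda>z. r * f z + s * g z)) y = A (\<lambda>z. r * B f z + s * B g z) y"
    by (rule simplex_linear_op_cong[OF A _ y]) (rule simplex_linear_op_lincomb[OF B fg])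
  also have "\<dots> = r * A (B f) y + s * A (B g) y"
    using fg by (intro simplex_linear_op_lincomb[OF A _ _ y] simplex_linear_op_poly[OF B])
  finally show "A (B (\<lambda>z. r * f z + s * g z)) y = r * A (B f) y + s * A (B g) y" .
qed

lemma simplex_linear_op_funpow: "simplex_linear_op d L \<Longrightarrow> simplex_linear_op d (L ^^ r)"
proof (induction r)
  case 0
  then show ?case using simplex_linear_op_id by (simp add: id_def)
next
  case (Suc r)
  then show ?case using simplex_linear_op_comp[OF Suc.prems Suc.IH[OF Suc.prems]] by (simp add: comp_def)
qed

lemma simplex_linear_op_funpow_partial: "i \<in> {1..d} \<Longrightarrow> simplex_linear_op d (partial i ^^ r)"
  by (intro simplex_linear_op_funpow simplex_linear_op_partial)

lemma simplex_linear_op_mixed_partial: "k \<le> d \<Longrightarrow> simplex_linear_op d (mixed_partial k m)"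
proof (induction k)
  case 0
  then show ?case using simplex_linear_op_id by simp
next
  case (Suc k)
  then have "simplex_linear_op d (partial (Suc k) ^^ m (Suc k))"
    by (intro simplex_linear_op_funpow_partial) auto
  from simplex_linear_op_comp[OF this Suc.IH] Suc.prems show ?case by simp
qed

lemma funpow_partial_slack:
  assumes i: "i \<in> {1..d}" and A: "simplex_poly d A" and y: "in_simplex_interior d y"
  shows "(partial i ^^ r) (\<lambda>z. (1 - abs_sum d z) * A z) y =
    (1 - abs_sum d y) * (partial i ^^ r) A y - real r * (partial i ^^ (r - 1)) A y"
  using y
proof (induction r arbitrary: y)
  case 0
  then show ?case by simp
next
  case (Suc r)
  let ?D = "partial i"
  have poly: "simplex_poly d ((?D ^^ q) A)" for q
    by (rule simplex_linear_op_poly[OF simplex_linear_op_funpow_partial[OF i] A])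
  have "(?D ^^ Suc r) (\<lambda>z. (1 - abs_sum d z) * A z) y =
      ?D (\<lambda>z. 1 * ((1 - abs_sum d z) * (?D ^^ r) A z) + (- real r) * (?D ^^ (r - 1)) A z) y"
    using Suc by (simp, intro partial_cong_simplex[OF _ Suc.prems i]) simp
  also have "\<dots> = ?D (\<lambda>z. (1 - abs_sum d z) * (?D ^^ r) A z) y - real r * ?D ((?D ^^ (r - 1)) A) y"
    using partial_lincomb[OF simplex_poly_slack[OF poly] poly Suc.prems i, where r = 1 and s = "- real r"]
    by simp
  also have "real r * ?D ((?D ^^ (r - 1)) A) y = real r * (?D ^^ r) A y"
    by (cases r) auto
  finally show ?case
    unfolding partial_slack[OF poly Suc.prems i] by (simp add: algebra_simps)
qed

lemma mixed_partial_cong_index: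
  "(\<And>j. 1 \<le> j \<Longrightarrow> j \<le> k \<Longrightarrow> m j = m' j) \<Longrightarrow> mixed_partial k m = mixed_partial k m'"
proof (induction k)
  case (Suc k)
  then have "mixed_partial k m = mixed_partial k m'" "m (Suc k) = m' (Suc k)" by auto
  then show ?case by (intro ext) simp
qed (simp add: fun_eq_iff)

lemma mixed_partial_slack:
  assumes g: "simplex_poly d g" and k: "k \<le> d" and y: "in_simplex_interior d y"
  shows "mixed_partial k m (\<lambda>z. (1 - abs_sum d z) * g z) y =
    (1 - abs_sum d y) * mixed_partial k m g y -
    (\<Sum>j=1..k. real (m j) * mixed_partial k (m(j := m j - 1)) g y)"
  using k y
proof (induction k arbitrary: y)
  case 0
  then show ?case by simp
next
  case (Suc k)
  let ?D = "partial (Suc k) ^^ m (Suc k)"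
  let ?M = "mixed_partial k m g"
  let ?N = "\<lambda>j. mixed_partial k (m(j := m j - 1)) g"
  let ?T = "\<lambda>j. real (m j) * mixed_partial (Suc k) (m(j := m j - 1)) g y"
  have i: "Suc k \<in> {1..d}" using Suc.prems by auto
  have D: "simplex_linear_op d ?D" by (rule simplex_linear_op_funpow_partial[OF i])
  have poly: "simplex_poly d (mixed_partial k q g)" for q
    using Suc.prems by (intro simplex_linear_op_poly[OF simplex_linear_op_mixed_partial g]) auto
  have "mixed_partial (Suc k) m (\<lambda>z. (1 - abs_sum d z) * g z) y =
      ?D (\<lambda>z. 1 * ((1 - abs_sum d z) * ?M z) + (-1) * (\<Sum>j=1..k. real (m j) * ?N j z)) y"
    using Suc by (simp, intro simplex_linear_op_cong[OF D]) (simp_all add: fun_upd_def)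
  also have "\<dots> = 1 * ?D (\<lambda>z. (1 - abs_sum d z) * ?M z) y +
      (-1) * ?D (\<lambda>z. \<Sum>j=1..k. real (m j) * ?N j z) y"
    by (rule simplex_linear_op_lincomb[OF D simplex_poly_slack[OF poly] simplex_poly_sum[OF _ poly]
          Suc.prems(2)]) simp
  also have "?D (\<lambda>z. \<Sum>j=1..k. real (m j) * ?N j z) y = (\<Sum>j=1..k. real (m j) * ?D (?N j) y)"
    by (rule simplex_linear_op_sum[OF D Suc.prems(2)]) (simp_all add: poly)
  also have "\<dots> = (\<Sum>j=1..k. real (m j) * mixed_partial (Suc k) (m(j := m j - 1)) g y)"
    by (rule sum.cong) auto
  also have "?D (\<lambda>z. (1 - abs_sum d z) * ?M z) y =
      (1 - abs_sum d y) * ?D ?M y - real (m (Suc k)) * (partial (Suc k) ^^ (m (Suc k) - 1)) ?M y"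
    by (rule funpow_partial_slack[OF i poly Suc.prems(2)])
  finally have chain: "mixed_partial (Suc k) m (\<lambda>z. (1 - abs_sum d z) * g z) y =
      1 * ((1 - abs_sum d y) * ?D ?M y - real (m (Suc k)) * (partial (Suc k) ^^ (m (Suc k) - 1)) ?M y) +
      (-1) * (\<Sum>j=1..k. real (m j) * mixed_partial (Suc k) (m(j := m j - 1)) g y)" .
  have "mixed_partial k (m(Suc k := m (Suc k) - 1)) g = ?M"
    by (subst mixed_partial_cong_index[of k _ m]) simp_all
  then have last: "mixed_partial (Suc k) (m(Suc k := m (Suc k) - 1)) g y =
      (partial (Suc k) ^^ (m (Suc k) - 1)) ?M y"
    by (simp only: mixed_partial.simps fun_upd_same)
  have top: "mixed_partial (Suc k) m g y = ?D ?M y" by simp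
  have split: "(\<Sum>j=1..Suc k. ?T j) = (\<Sum>j=1..k. ?T j) + ?T (Suc k)"
    by (rule sum.cl_ivl_Suc[THEN trans]) simp
  show ?case unfolding split last top chain by (simp add: algebra_simps)
qed


lemma funpow_partial_commute:
  assumes f: "simplex_poly d f" and i: "i \<in> {1..d}" and j: "j \<in> {1..d}"
    and y: "in_simplex_interior d y"
  shows "(partial j ^^ r) (partial i f) y = partial i ((partial j ^^ r) f) y"
  using y
proof (induction r arbitrary: y)
  case (Suc r)
  have poly: "simplex_poly d ((partial j ^^ r) f)"
    by (rule simplex_linear_op_poly[OF simplex_linear_op_funpow_partial[OF j] f])
  have "(partial j ^^ Suc r) (partial i f) y = partial j (partial i ((partial j ^^ r) f)) y"
    using Suc by (simp, intro partial_cong_simplex[OF _ Suc.prems j]) simp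
  also have "\<dots> = partial i ((partial j ^^ Suc r) f) y"
    using partial_commute[OF poly Suc.prems j i] by simp
  finally show ?case .
qed simp

lemma mixed_partial_partial_commute:
  assumes f: "simplex_poly d f" and i: "i \<in> {1..d}" and k: "k < i"
    and y: "in_simplex_interior d y"
  shows "mixed_partial k m (partial i f) y = partial i (mixed_partial k m f) y"
  using k y
proof (induction k arbitrary: y)
  case (Suc k)
  have sk: "Suc k \<in> {1..d}" using Suc.prems i by auto
  have poly: "simplex_poly d (mixed_partial k m f)"
    using Suc.prems i by (intro simplex_linear_op_poly[OF simplex_linear_op_mixed_partial f]) auto
  have "mixed_partial (Suc k) m (partial i f) y =
      (partial (Suc k) ^^ m (Suc k)) (partial i (mixed_partial k m f)) y"
    using Suc by (simp, intro simplex_linear_op_cong[OF simplex_linear_op_funpow_partial[OF sk]]) simp_all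
  also have "\<dots> = partial i (mixed_partial (Suc k) m f) y"
    using funpow_partial_commute[OF poly i sk Suc.prems(2)] by simp
  finally show ?case .
qed simp

lemma mixed_partial_partial:
  assumes f: "simplex_poly d f" and i: "1 \<le> i" "i \<le> k" and k: "k \<le> d"
    and y: "in_simplex_interior d y"
  shows "mixed_partial k m (partial i f) y = mixed_partial k (m(i := m i + 1)) f y"
  using i k y
proof (induction k arbitrary: y)
  case (Suc k)
  have sk: "Suc k \<in> {1..d}" using Suc.prems by auto
  have D: "simplex_linear_op d (partial (Suc k) ^^ r)" for r
    by (rule simplex_linear_op_funpow_partial[OF sk])
  show ?case
  proof (cases "i = Suc k")
    case True
    have "mixed_partial (Suc k) m (partial i f) y = (partial i ^^ m i) (partial i (mixed_partial k m f)) y"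
      using True Suc.prems
      by (simp, intro simplex_linear_op_cong[OF D] mixed_partial_partial_commute[OF f]) simp_all
    also have "\<dots> = mixed_partial (Suc k) (m(i := m i + 1)) f y"
      using True mixed_partial_cong_index[of k m "m(i := m i + 1)"] by (simp add: funpow_swap1)
    finally show ?thesis .
  next
    case False
    then have "mixed_partial (Suc k) m (partial i f) y =
        (partial (Suc k) ^^ m (Suc k)) (mixed_partial k (m(i := m i + 1)) f) y"
      using Suc by (simp, intro simplex_linear_op_cong[OF D]) (simp_all add: fun_upd_def)
    with False show ?thesis by (simp add: fun_upd_def)
  qed
qed simp

lemma rodrigues_eq_mixed_partial_monomial:
  assumes "\<And>j. j \<in> {1..d} \<Longrightarrow> a j = \<gamma> j + real (n j)"
    and "b = \<gamma> (d + 1) + real (abs_sum d n)"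
  shows "rodrigues d \<gamma> n x = (\<Prod>j=1..d. x j powr (- \<gamma> j)) * (1 - abs_sum d x) powr (- \<gamma> (d + 1)) *
    mixed_partial d n (monomial d a b) x"
proof -
  have "(\<lambda>y. (\<Prod>j=1..d. y j powr (\<gamma> j + real (n j))) *
      (1 - abs_sum d y) powr (\<gamma> (d + 1) + real (abs_sum d n))) = monomial d a b"
    using assms by (auto simp: monomial_def fun_eq_iff intro!: prod.cong)
  then show ?thesis by (simp add: rodrigues_def)
qed

lemma abs_sum_lower_index:
  "i \<in> {1..d} \<Longrightarrow> 1 \<le> n i \<Longrightarrow> real (abs_sum d (n(i := n i - 1))) = real (abs_sum d n) - 1"
  using abs_sum_fun_upd[of i d "\<lambda>j. real (n j)" "real (n i - 1)"]
  by (simp add: abs_sum_def of_nat_diff fun_upd_def if_distrib cong: if_cong)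

lemma mixed_partial_monomial_lower:
  assumes i: "i \<in> {1..d}" "1 \<le> n i" and x: "in_simplex_interior d x"
  shows "a i * mixed_partial d (n(i := n i - 1)) (monomial d (a(i := a i - 1)) b) x =
    mixed_partial d n (monomial d a b) x + b * mixed_partial d (n(i := n i - 1)) (monomial d a (b - 1)) x"
proof -
  let ?n' = "n(i := n i - 1)"
  have D: "simplex_linear_op d (mixed_partial d m)" for m
    by (rule simplex_linear_op_mixed_partial) simp
  have pointwise: "a i * monomial d (a(i := a i - 1)) b z =
      1 * partial i (monomial d a b) z + b * monomial d a (b - 1) z"
    if "in_simplex_interior d z" for z
    using partial_monomial[OF that i(1)] by simp
  have "a i * mixed_partial d ?n' (monomial d (a(i := a i - 1)) b) x =
      mixed_partial d ?n' (\<lambda>z. a i * monomial d (a(i := a i - 1)) b z) x"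
    by (rule simplex_linear_op_scale[OF D _ x, symmetric]) simp
  also have "\<dots> = mixed_partial d ?n' (\<lambda>z. 1 * partial i (monomial d a b) z + b * monomial d a (b - 1) z) x"
    by (rule simplex_linear_op_cong[OF D pointwise x])
  also have "\<dots> = 1 * mixed_partial d ?n' (partial i (monomial d a b)) x +
      b * mixed_partial d ?n' (monomial d a (b - 1)) x"
    using i(1) by (intro simplex_linear_op_lincomb[OF D _ _ x] simplex_poly_partial) simp_all
  also have "mixed_partial d ?n' (partial i (monomial d a b)) x = mixed_partial d n (monomial d a b) x"
    using i x by (subst mixed_partial_partial) (auto intro!: arg_cong[of _ _ "\<lambda>m. mixed_partial d m _ x"])
  finally show ?thesis by (simp only: mult_1_left)
qed


lemma mixed_partial_monomial_slack:
  assumes x: "in_simplex_interior d x"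
  shows "mixed_partial d n (monomial d a b) x =
    (1 - abs_sum d x) * mixed_partial d n (monomial d a (b - 1)) x -
    (\<Sum>j=1..d. real (n j) * mixed_partial d (n(j := n j - 1)) (monomial d a (b - 1)) x)"
proof -
  have "mixed_partial d n (monomial d a b) x =
      mixed_partial d n (\<lambda>z. (1 - abs_sum d z) * monomial d a (b - 1) z) x"
    using monomial_add_one[of d _ a "b - 1"]
    by (intro simplex_linear_op_cong[OF simplex_linear_op_mixed_partial[OF order.refl] _ x]) simp
  also have "\<dots> = (1 - abs_sum d x) * mixed_partial d n (monomial d a (b - 1)) x -
    (\<Sum>j=1..d. real (n j) * mixed_partial d (n(j := n j - 1)) (monomial d a (b - 1)) x)"
    by (rule mixed_partial_slack[OF simplex_poly_monomial order.refl x])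
  finally show ?thesis .
qed

lemma sum_mixed_partial_monomial_lower:
  assumes n: "\<forall>i\<in>{1..d}. 1 \<le> n i" and x: "in_simplex_interior d x"
    and N: "N = real (abs_sum d n)"
  shows "(\<Sum>i=1..d. real (n i) * a i * mixed_partial d (n(i := n i - 1)) (monomial d (a(i := a i - 1)) N) x) =
    N * (1 - abs_sum d x) * mixed_partial d n (monomial d a (N - 1)) x"
proof -
  let ?M = "mixed_partial d n (monomial d a N) x"
  let ?G = "\<lambda>i. mixed_partial d (n(i := n i - 1)) (monomial d a (N - 1)) x"
  have "(\<Sum>i=1..d. real (n i) * a i * mixed_partial d (n(i := n i - 1)) (monomial d (a(i := a i - 1)) N) x) =
      (\<Sum>i=1..d. real (n i) * ?M + N * (real (n i) * ?G i))"
  proof (rule sum.cong[OF refl])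
    fix i assume i: "i \<in> {1..d}"
    have "a i * mixed_partial d (n(i := n i - 1)) (monomial d (a(i := a i - 1)) N) x = ?M + N * ?G i"
      using n i by (intro mixed_partial_monomial_lower[OF i _ x]) auto
    from arg_cong[OF this, of "(*) (real (n i))"]
    show "real (n i) * a i * mixed_partial d (n(i := n i - 1)) (monomial d (a(i := a i - 1)) N) x =
        real (n i) * ?M + N * (real (n i) * ?G i)"
      by (simp add: algebra_simps)
  qed
  also have "\<dots> = (\<Sum>i=1..d. real (n i)) * ?M + N * (\<Sum>i=1..d. real (n i) * ?G i)"
    unfolding sum.distrib sum_distrib_left sum_distrib_right ..
  also have "(\<Sum>i=1..d. real (n i)) = N"
    unfolding N abs_sum_def by simp
  also have "N * ?M + N * (\<Sum>i=1..d. real (n i) * ?G i) = N * (1 - abs_sum d x) * mixed_partial d n (monomial d a (N - 1)) x"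
    by (simp only: mixed_partial_monomial_slack[OF x, of n a N]) (simp add: algebra_simps)
  finally show ?thesis .
qed

theorem lemma4p1:
  fixes d :: nat and \<gamma> :: "nat \<Rightarrow> real" and n :: "nat \<Rightarrow> nat" and x :: "nat \<Rightarrow> real"
  assumes "d \<ge> 1"
    and "\<forall>i\<in>{1..d}. n i \<ge> 1"
    and "in_simplex_interior d x"
  shows "rodrigues d (\<gamma>(d+1 := -1)) n x =
         (1 - abs_sum d x) *
         (\<Sum>i=1..d. real (n i) * (\<gamma> i + real (n i)) / real (abs_sum d n) *
                     rodrigues d (\<gamma>(d+1 := 1)) (n(i := n i - 1)) x)"
proof -
  define a where "a = (\<lambda>j. \<gamma> j + real (n j))"
  define N where "N = real (abs_sum d n)"
  define W where "W = (\<Prod>j=1..d. x j powr (- \<gamma> j))"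
  define M where "M = (\<lambda>m a b. mixed_partial d m (monomial d a b) x)"
  have L: "1 - abs_sum d x > 0" using assms(3) by (simp add: in_simplex_interior_def)
  have "(\<Sum>i=1..d. 1 :: real) \<le> (\<Sum>i=1..d. real (n i))"
    using assms(2) by (intro sum_mono) auto
  then have "N > 0" using assms(1) by (simp add: N_def abs_sum_def)
  have "rodrigues d (\<gamma>(d+1 := -1)) n x = W * (1 - abs_sum d x) * M n a (N - 1)"
    using L by (subst rodrigues_eq_mixed_partial_monomial[where a = a and b = "N - 1"])
      (simp_all add: a_def N_def W_def M_def)
  also have "\<dots> = W / N * (\<Sum>i=1..d. real (n i) * a i * M (n(i := n i - 1)) (a(i := a i - 1)) N)"
    using sum_mixed_partial_monomial_lower[OF assms(2,3) N_def] \<open>N > 0\<close> by (simp add: M_def)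
  also have "\<dots> = (1 - abs_sum d x) * (\<Sum>i=1..d. real (n i) * a i / N *
      (W * (1 - abs_sum d x) powr (-1) * M (n(i := n i - 1)) (a(i := a i - 1)) N))"
    unfolding sum_distrib_left by (rule sum.cong[OF refl]) (use L in \<open>simp add: powr_minus\<close>)
  also have "\<dots> = (1 - abs_sum d x) * (\<Sum>i=1..d. real (n i) * a i / N *
      rodrigues d (\<gamma>(d+1 := 1)) (n(i := n i - 1)) x)"
  proof -
    have "rodrigues d (\<gamma>(d+1 := 1)) (n(i := n i - 1)) x =
        W * (1 - abs_sum d x) powr (-1) * M (n(i := n i - 1)) (a(i := a i - 1)) N"
      if i: "i \<in> {1..d}" for i
      using i assms(2) abs_sum_lower_index[OF i, of n]
      by (subst rodrigues_eq_mixed_partial_monomial[where a = "a(i := a i - 1)" and b = N])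
        (auto simp: a_def N_def W_def M_def of_nat_diff)
    then show ?thesis by simp
  qed
  finally show ?thesis by (simp add: a_def N_def)
qed

end
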